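(* Let $X$ be a Hilbert space, $C\subseteq X$ a nonempty subset, $N:C\to S_X$ a mapping, and $r>0$. For $y\in C$ let $B_y$ be the closed ball $B(y-rN(y),r)$, and let $V:=\overline{\operatorname{co}}\big(\bigcup_{y\in C}B_y\big)$ be the closed convex hull of these balls. Then for every $x\in\partial V$ there exists $z_x\in V$ such that the closed ball $B(z_x,r)$ is contained in $V$ and $x\in\partial B(z_x,r)$.
   Context: $S_X$ is the unit sphere of $X$; $B(z,r)$ denotes the closed ball of center $z$ and radius $r$; $\overline{\operatorname{co}}$ denotes the closed convex hull. *)

theory Defs
  imports "HOL-Analysis.Analysis"
begin

end

theory Submission
  imports Defs
begin

text \<open>Write \<open>V\<close> for the closed convex hull of the balls and \<open>D\<close> for the closed convex hull of
  their centres. Since \<open>V\<close> is the closure of \<open>D + B(0,r)\<close>, every ball of radius \<open>r\<close> centred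
  in \<open>D\<close> lies in \<open>V\<close>, while every point of \<open>V\<close> is within distance \<open>r\<close> of \<open>D\<close>. For a
  boundary point \<open>x\<close> of \<open>V\<close> take its projection \<open>z\<close> onto \<open>D\<close> (which exists because \<open>X\<close>
  is a Hilbert space): \<open>dist x z \<le> r\<close>, and strict inequality would put \<open>x\<close> in the interior
  of \<open>V\<close>, so \<open>x\<close> lies on the sphere \<open>S(z,r)\<close>.\<close>

lemma dist_midpoint_parallelogram:
  fixes x p q :: "'a::real_inner"
  shows "(dist p q)\<^sup>2 = 2 * (dist x p)\<^sup>2 + 2 * (dist x q)\<^sup>2 - 4 * (dist x (midpoint p q))\<^sup>2"
  by (simp add: midpoint_def dist_norm power2_norm_eq_inner inner_diff inner_add algebra_simps inner_commute)

lemma convex_minimizing_sequence_Cauchy: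
  fixes S :: "'a::real_inner set"
  assumes "convex S" and P: "\<And>n. P n \<in> S"
    and lim: "(\<lambda>n. dist x (P n)) \<longlonglongrightarrow> infdist x S"
  shows "Cauchy P"
proof (rule metric_CauchyI)
  fix e :: real assume "0 < e"
  define d where "d = infdist x S"
  define \<delta> where "\<delta> n = (dist x (P n))\<^sup>2 - d\<^sup>2" for n
  have "\<delta> \<longlonglongrightarrow> d\<^sup>2 - d\<^sup>2"
    unfolding \<delta>_def d_def by (intro tendsto_intros lim)
  then have "\<forall>\<^sub>F n in sequentially. \<delta> n < e\<^sup>2 / 4"
    using \<open>0 < e\<close> by (intro order_tendstoD) auto
  then obtain M where M: "\<And>n. n \<ge> M \<Longrightarrow> \<delta> n < e\<^sup>2 / 4"
    by (auto simp: eventually_sequentially)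
  have "dist (P m) (P n) < e" if "m \<ge> M" "n \<ge> M" for m n
  proof -
    have "midpoint (P m) (P n) \<in> S"
      using convexD[OF \<open>convex S\<close> P P, of "1/2" "1/2"] by (simp add: midpoint_def scaleR_right_distrib)
    then have "d \<le> dist x (midpoint (P m) (P n))"
      unfolding d_def by (rule infdist_le)
    then have "d\<^sup>2 \<le> (dist x (midpoint (P m) (P n)))\<^sup>2"
      by (simp add: d_def infdist_nonneg power_mono)
    then have "(dist (P m) (P n))\<^sup>2 \<le> 2 * \<delta> m + 2 * \<delta> n"
      using dist_midpoint_parallelogram[of "P m" "P n" x] unfolding \<delta>_def by argo
    also have "\<dots> < e\<^sup>2"
      using M[OF that(1)] M[OF that(2)] by linarith
    finally show ?thesis
      using \<open>0 < e\<close> by (simp add: power_less_imp_less_base)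
  qed
  then show "\<exists>M. \<forall>m\<ge>M. \<forall>n\<ge>M. dist (P m) (P n) < e"
    by blast
qed

text \<open>The projection theorem: completeness replaces the compactness that the library's
  \<open>closest_point\<close> needs.\<close>

lemma closed_convex_infdist_attained:
  fixes S :: "'a::{real_inner,complete_space} set"
  assumes "closed S" "convex S" "S \<noteq> {}"
  obtains p where "p \<in> S" "dist x p = infdist x S"
proof -
  have bdd: "bdd_below (dist x ` S)"
    by (auto intro: bdd_belowI[of _ 0])
  have "\<exists>q\<in>S. dist x q < infdist x S + inverse (Suc n)" for n
  proof -
    have "Inf (dist x ` S) < infdist x S + inverse (Suc n)"
      using \<open>S \<noteq> {}\<close> by (simp add: infdist_notempty)
    then show ?thesis
      using cInf_less_iff[OF _ bdd] \<open>S \<noteq> {}\<close> by auto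
  qed
  then obtain P where P: "\<And>n. P n \<in> S" "\<And>n. dist x (P n) < infdist x S + inverse (Suc n)"
    by metis
  have upper: "(\<lambda>n. infdist x S + inverse (Suc n)) \<longlonglongrightarrow> infdist x S"
    using LIMSEQ_inverse_real_of_nat tendsto_add[OF tendsto_const] by fastforce
  have "\<forall>\<^sub>F n in sequentially. infdist x S \<le> dist x (P n)"
    using P(1) by (simp add: infdist_le)
  moreover have "\<forall>\<^sub>F n in sequentially. dist x (P n) \<le> infdist x S + inverse (Suc n)"
    using P(2) by (simp add: less_imp_le)
  ultimately have lim: "(\<lambda>n. dist x (P n)) \<longlonglongrightarrow> infdist x S"
    by (rule real_tendsto_sandwich[OF _ _ tendsto_const upper])
  obtain p where p: "P \<longlonglongrightarrow> p"
    using convex_minimizing_sequence_Cauchy[OF \<open>convex S\<close> P(1) lim]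
    by (auto simp: Cauchy_convergent_iff convergent_def)
  have "(\<lambda>n. dist x (P n)) \<longlonglongrightarrow> dist x p"
    using p by (intro tendsto_intros)
  then have "dist x p = infdist x S"
    using lim by (rule LIMSEQ_unique)
  moreover have "p \<in> S"
    using closed_sequentially[OF \<open>closed S\<close> P(1) p] .
  ultimately show thesis
    using that by blast
qed

lemma sphere_subset_frontier_cball:
  fixes p :: "'a::real_normed_vector"
  assumes "0 < r"
  shows "sphere p r \<subseteq> frontier (cball p r)"
proof
  fix x assume x: "x \<in> sphere p r"
  have "x \<notin> interior (cball p r)"
  proof
    assume "x \<in> interior (cball p r)"
    then obtain e where "0 < e" "ball x e \<subseteq> cball p r"
      by (auto simp: mem_interior)
    define w where "w = x + (e / 2 / r) *\<^sub>R (x - p)"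
    have nxp: "norm (x - p) = r"
      using x by (simp add: dist_norm norm_minus_commute)
    have "dist x w = e / 2"
      using \<open>0 < r\<close> \<open>0 < e\<close> nxp by (simp add: w_def dist_norm)
    with \<open>0 < e\<close> have "w \<in> ball x e"
      by simp
    with \<open>ball x e \<subseteq> cball p r\<close> have "dist p w \<le> r"
      by auto
    moreover have "w - p = (1 + e / 2 / r) *\<^sub>R (x - p)"
      by (simp add: w_def algebra_simps)
    then have "norm (w - p) = (1 + e / 2 / r) * r"
      using nxp \<open>0 < r\<close> \<open>0 < e\<close> by simp
    then have "dist p w = r + e / 2"
      using \<open>0 < r\<close> by (simp add: dist_norm norm_minus_commute algebra_simps)
    ultimately show False
      using \<open>0 < e\<close> by simp
  qed
  then show "x \<in> frontier (cball p r)"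
    using x by (simp add: frontier_def)
qed

lemma cball_eq_singleton_plus: "cball a r = {a} + cball (0::'a::real_normed_vector) r"
  using cball_translation[of a 0 r] by (simp add: translation_eq_singleton_plus)

lemma Union_cball_eq_set_plus: "(\<Union>k\<in>K. cball k r) = K + cball (0::'a::real_normed_vector) r"
proof -
  have "(\<Union>k\<in>K. cball k r) = (\<Union>k\<in>K. {k} + cball 0 r)"
    by (intro SUP_cong refl cball_eq_singleton_plus)
  also have "\<dots> = K + cball 0 r"
    by (auto simp: set_plus_def)
  finally show ?thesis .
qed

lemma infdist_le_closure_set_plus_cball:
  fixes A :: "'a::real_normed_vector set"
  assumes "x \<in> closure (A + cball 0 r)"
  shows "infdist x A \<le> r"
proof -
  have "A + cball 0 r \<subseteq> {y. infdist y A \<le> r}"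
  proof
    fix y assume "y \<in> A + cball 0 r"
    then obtain a b where "a \<in> A" "norm b \<le> r" "y = a + b"
      by (auto elim!: set_plus_elim)
    then show "y \<in> {y. infdist y A \<le> r}"
      using infdist_le2[of a A y r] by (simp add: dist_norm)
  qed
  moreover have "closed {y. infdist y A \<le> r}"
    by (intro closed_Collect_le continuous_intros)
  ultimately show ?thesis
    using assms closure_minimal by blast
qed

lemma convex_hull_Union_cball:
  fixes K :: "'a::real_normed_vector set"
  shows "convex hull (\<Union>k\<in>K. cball k r) = convex hull K + cball 0 r"
  by (simp add: Union_cball_eq_set_plus convex_hull_set_plus
      convex_hull_eq[THEN iffD2, OF convex_cball])

lemma cball_subset_closure_convex_hull_Union_cball:
  fixes K :: "'a::real_normed_vector set"
  assumes "p \<in> closure (convex hull K)"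
  shows "cball p r \<subseteq> closure (convex hull (\<Union>k\<in>K. cball k r))"
proof -
  have "cball p r = {p} + cball 0 r"
    by (rule cball_eq_singleton_plus)
  also have "\<dots> \<subseteq> closure (convex hull K) + closure (cball 0 r)"
    using assms by (simp add: set_plus_mono2)
  also have "\<dots> \<subseteq> closure (convex hull (\<Union>k\<in>K. cball k r))"
    unfolding convex_hull_Union_cball by (rule closure_sum)
  finally show ?thesis .
qed

lemma infdist_closure_convex_hull_Union_cball_le:
  fixes K :: "'a::real_normed_vector set"
  assumes "x \<in> closure (convex hull (\<Union>k\<in>K. cball k r))"
  shows "infdist x (closure (convex hull K)) \<le> r"
proof (rule infdist_le_closure_set_plus_cball)
  have "closure (convex hull (\<Union>k\<in>K. cball k r)) \<subseteq> closure (closure (convex hull K) + cball 0 r)"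
    unfolding convex_hull_Union_cball by (intro closure_mono set_plus_mono2 closure_subset order_refl)
  with assms show "x \<in> closure (closure (convex hull K) + cball 0 r)"
    by blast
qed

lemma frontier_closure_convex_hull_Union_cball:
  fixes K :: "'a::{real_inner,complete_space} set" and r :: real
  defines "V \<equiv> closure (convex hull (\<Union>k\<in>K. cball k r))"
  assumes "0 < r" and x: "x \<in> frontier V"
  obtains z where "z \<in> V" "cball z r \<subseteq> V" "x \<in> frontier (cball z r)"
proof -
  define D where "D = closure (convex hull K)"
  have "x \<in> V"
    using x by (simp add: V_def frontier_def)
  then have "K \<noteq> {}"
    by (auto simp: V_def)
  then have "closed D" "convex D" "D \<noteq> {}"
    by (simp_all add: D_def convex_closure)
  then obtain p where "p \<in> D" and p: "dist x p = infdist x D"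
    by (rule closed_convex_infdist_attained)
  have cball_V: "cball p r \<subseteq> V"
    using \<open>p \<in> D\<close> unfolding V_def D_def by (rule cball_subset_closure_convex_hull_Union_cball)
  have "dist x p \<le> r"
    using \<open>x \<in> V\<close> p infdist_closure_convex_hull_Union_cball_le by (simp add: V_def D_def)
  moreover have "\<not> dist x p < r"
  proof
    assume "dist x p < r"
    have "ball x (r - dist x p) \<subseteq> V"
    proof
      fix w assume "w \<in> ball x (r - dist x p)"
      then have "dist p w \<le> r"
        using dist_triangle[of p w x] by (simp add: dist_commute)
      then show "w \<in> V"
        using cball_V by auto
    qed
    then have "x \<in> interior V"
      using \<open>dist x p < r\<close> unfolding mem_interior by (intro exI[of _ "r - dist x p"]) simp
    with x show False
      by (simp add: frontier_def)
  qed
  ultimately have "x \<in> sphere p r"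
    by (simp add: dist_commute)
  moreover have "p \<in> V"
    using cball_V \<open>0 < r\<close> by auto
  ultimately show thesis
    using that cball_V sphere_subset_frontier_cball[OF \<open>0 < r\<close>] by blast
qed

theorem claim4p1:
  fixes C :: "'a::{real_inner,complete_space} set"
    and N :: "'a \<Rightarrow> 'a"
    and r :: real
  assumes "C \<noteq> {}"
    and "\<forall>y\<in>C. N y \<in> sphere 0 1"
    and "r > 0"
  shows "\<forall>x \<in> frontier (closure (convex hull (\<Union>y\<in>C. cball (y - r *\<^sub>R N y) r))).
           \<exists>z \<in> closure (convex hull (\<Union>y\<in>C. cball (y - r *\<^sub>R N y) r)).
             cball z r \<subseteq> closure (convex hull (\<Union>y\<in>C. cball (y - r *\<^sub>R N y) r))
             \<and> x \<in> frontier (cball z r)"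
proof
  fix x
  assume "x \<in> frontier (closure (convex hull (\<Union>y\<in>C. cball (y - r *\<^sub>R N y) r)))"
  then have "x \<in> frontier (closure (convex hull (\<Union>k\<in>(\<lambda>y. y - r *\<^sub>R N y) ` C. cball k r)))"
    by simp
  from frontier_closure_convex_hull_Union_cball[OF \<open>r > 0\<close> this]
  show "\<exists>z \<in> closure (convex hull (\<Union>y\<in>C. cball (y - r *\<^sub>R N y) r)).
          cball z r \<subseteq> closure (convex hull (\<Union>y\<in>C. cball (y - r *\<^sub>R N y) r))
          \<and> x \<in> frontier (cball z r)"
    by auto
qed

end
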